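(* Assume the standing setting of the context. Let $(x,y)\in\Lambda$ with $y>0$ and let $a\in W(x,y)$. Then \[ \Big[\frac{x-1}{y},\,a\Big]\cap A\subseteq W(x,y). \]
   Context: Setting. Let $\Lambda\subset\mathbb{R}^2$ be the (discrete) set of holonomy vectors of saddle connections of a Veech translation surface, normalized at a cusp of its Veech group as in Kumanduri–Sanchez–Wang. Distinguished vector. $(x_0,y_0)\in\Lambda$ is the vector with $y_0>0$ the smallest positive $y$-component in $\Lambda$, and $x_0>0$ the smallest positive $x$-component among vectors of $\Lambda$ with $y$-component $y_0$. Cusp parameters. $\alpha>0$ is the cusp parameter and $n\in\{1,2\}$. Transversal. \[ \Omega=\{(a,b): 0<b\le1,\ \tfrac{x_0}{y_0}b-\tfrac1{y_0}\le a<(\tfrac{x_0}{y_0}+n\alpha)b-\tfrac1{y_0}\}. \] Its top edge is $A=[\tfrac{x_0-1}{y_0},\tfrac{x_0-1}{y_0}+n\alpha)\subset\mathbb{R}$, identified with $\Omega\cap\{b=1\}$ via $a\mapsto(a,1)$. Winners. A vector $(x,y)\in\Lambda$ is a candidate winning vector at $(a,b)$ if $y>0$ and $0<bx-ay\le1$. The winner at $(a,b)\in\Omega$ is the candidate with the largest $x/y$ (least slope), with ties broken by choosing the shortest. Winning sets. For $(x,y)\in\Lambda$ with $y>0$, $W(x,y)=\{a\in A: (x,y)\text{ is the winner at }(a,1)\}$. Standing fact: every point of $A$ has a winner. *)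

theory Defs
  imports "HOL-Analysis.Analysis"
begin

definition candidate :: "(real \<times> real) set \<Rightarrow> real \<Rightarrow> real \<Rightarrow> real \<times> real \<Rightarrow> bool" where
  "candidate \<Lambda> a b p \<longleftrightarrow> p \<in> \<Lambda> \<and> snd p > 0 \<and>
     0 < b * fst p - a * snd p \<and> b * fst p - a * snd p \<le> 1"

definition is_winner :: "(real \<times> real) set \<Rightarrow> real \<Rightarrow> real \<Rightarrow> real \<times> real \<Rightarrow> bool" where
  "is_winner \<Lambda> a b p \<longleftrightarrow> candidate \<Lambda> a b p \<and>
     (\<forall>q. candidate \<Lambda> a b q \<and> q \<noteq> p \<longrightarrow>
        fst q / snd q < fst p / snd p \<or>
        (fst q / snd q = fst p / snd p \<and> norm p < norm q))"

definition topEdge :: "real \<Rightarrow> real \<Rightarrow> nat \<Rightarrow> real \<Rightarrow> real set" where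
  "topEdge x0 y0 n \<alpha> = {(x0 - 1) / y0 ..< (x0 - 1) / y0 + real n * \<alpha>}"

definition winning_set :: "(real \<times> real) set \<Rightarrow> real set \<Rightarrow> real \<times> real \<Rightarrow> real set" where
  "winning_set \<Lambda> A p = {a \<in> A. is_winner \<Lambda> a 1 p}"

end

theory Submission
  imports Defs
begin

text \<open>At height 1 a vector (u, v) of \<Lambda> with v > 0 is a candidate exactly for t in the
  half-open interval [(u - 1)/v, u/v). Moving t to the left inside the interval of the winner
  (x, y) at a keeps (x, y) a candidate. A rival candidate at t with u/v \<ge> x/y has
  (u - 1)/v \<le> t \<le> a < x/y \<le> u/v, so it was already a candidate at a, where (x, y) beat it.\<close>

lemma candidate_top_iff:
  "candidate \<Lambda> t 1 (u, v) \<longleftrightarrow> (u, v) \<in> \<Lambda> \<and> v > 0 \<and> (u - 1) / v \<le> t \<and> t < u / v"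
proof -
  have "v > 0 \<Longrightarrow> (u - 1) / v \<le> t \<longleftrightarrow> u - t * v \<le> 1"
    by (simp add: pos_divide_le_eq algebra_simps)
  moreover have "v > 0 \<Longrightarrow> t < u / v \<longleftrightarrow> 0 < u - t * v"
    by (simp add: pos_less_divide_eq algebra_simps)
  ultimately show ?thesis
    by (auto simp: candidate_def)
qed

lemma candidate_top_left_shift:
  assumes "candidate \<Lambda> a 1 (u, v)" "(u - 1) / v \<le> t" "t \<le> a"
  shows "candidate \<Lambda> t 1 (u, v)"
  using assms by (auto simp: candidate_top_iff)

lemma is_winner_top_left_shift:
  assumes win: "is_winner \<Lambda> a 1 (x, y)" and left: "(x - 1) / y \<le> t" and t_le: "t \<le> a"
  shows "is_winner \<Lambda> t 1 (x, y)"
  unfolding is_winner_def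
proof (intro conjI allI impI)
  have cand_a: "candidate \<Lambda> a 1 (x, y)"
    using win by (simp add: is_winner_def)
  then show "candidate \<Lambda> t 1 (x, y)"
    using left t_le by (rule candidate_top_left_shift)
  have a_less: "a < x / y"
    using cand_a by (simp add: candidate_top_iff)
  fix q assume q: "candidate \<Lambda> t 1 q \<and> q \<noteq> (x, y)"
  obtain u v where q_eq: "q = (u, v)" by force
  show "fst q / snd q < fst (x, y) / snd (x, y) \<or>
      fst q / snd q = fst (x, y) / snd (x, y) \<and> norm (x, y) < norm q"
  proof (cases "u / v < x / y")
    case True
    then show ?thesis by (simp add: q_eq)
  next
    case False
    have "candidate \<Lambda> t 1 (u, v)"
      using q q_eq by simp
    with False a_less t_le have "candidate \<Lambda> a 1 q"
      unfolding q_eq candidate_top_iff by linarith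
    with win q show ?thesis
      unfolding is_winner_def by blast
  qed
qed

theorem mainTheorem5:
  fixes \<Lambda> :: "(real \<times> real) set" and x0 y0 \<alpha> :: real and n :: nat and x y a :: real
  assumes discrete: "\<And>r. finite {p \<in> \<Lambda>. norm p \<le> r}"
    and x0y0_in: "(x0, y0) \<in> \<Lambda>" and y0_pos: "y0 > 0"
    and y0_min: "\<And>u v. (u, v) \<in> \<Lambda> \<Longrightarrow> v > 0 \<Longrightarrow> y0 \<le> v"
    and x0_pos: "x0 > 0"
    and x0_min: "\<And>u. (u, y0) \<in> \<Lambda> \<Longrightarrow> u > 0 \<Longrightarrow> x0 \<le> u"
    and alpha_pos: "\<alpha> > 0" and n12: "n \<in> {1, 2}"
    and winners_exist: "\<And>t. t \<in> topEdge x0 y0 n \<alpha> \<Longrightarrow> \<exists>p. is_winner \<Lambda> t 1 p"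
    and xy_in: "(x, y) \<in> \<Lambda>" and y_pos: "y > 0"
    and a_win: "a \<in> winning_set \<Lambda> (topEdge x0 y0 n \<alpha>) (x, y)"
  shows "{(x - 1) / y .. a} \<inter> topEdge x0 y0 n \<alpha> \<subseteq> winning_set \<Lambda> (topEdge x0 y0 n \<alpha>) (x, y)"
proof
  fix t assume t: "t \<in> {(x - 1) / y .. a} \<inter> topEdge x0 y0 n \<alpha>"
  have "is_winner \<Lambda> a 1 (x, y)"
    using a_win by (simp add: winning_set_def)
  moreover have "(x - 1) / y \<le> t" "t \<le> a"
    using t by auto
  ultimately have "is_winner \<Lambda> t 1 (x, y)"
    by (rule is_winner_top_left_shift)
  with t show "t \<in> winning_set \<Lambda> (topEdge x0 y0 n \<alpha>) (x, y)"
    by (simp add: winning_set_def)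
qed

end
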